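(* Let $X$ be a complex vector space equipped with an inner product $\langle\cdot,\cdot\rangle'$. Suppose that for each $\alpha\in(0,1]$ we are given a map $\langle\cdot,\cdot\rangle_\alpha : X\times X\to\mathbb{C}$ and real constants $A_\alpha,B_\alpha$ with $0<A_\alpha\le B_\alpha<\infty$ such that for all $x,y\in X$ and all $\alpha\in(0,1]$, \[ A_\alpha\,|\langle x,y\rangle'| \le |\langle x,y\rangle_\alpha| \le B_\alpha\,|\langle x,y\rangle'|, \] and suppose moreover that $\sup_{\alpha\in(0,1]} B_\alpha/A_\alpha<\infty$. Then there exists $M\in[1,\infty)$ such that for every $\alpha\in(0,1]$, all $x,y,z\in X$ and all $k\in\mathbb{C}$: 1. $\frac{|k|}{M}|\langle x,y\rangle_\alpha|\le|\langle kx,y\rangle_\alpha|\le |k|M|\langle x,y\rangle_\alpha|$; 2. $\frac{|k|}{M}|\langle x,y\rangle_\alpha|\le|\langle x,ky\rangle_\alpha|\le |k|M|\langle x,y\rangle_\alpha|$; 3. $\frac{|k|}{M}|\langle y,x\rangle_\alpha|\le|\langle kx,y\rangle_\alpha|\le |k|M|\langle y,x\rangle_\alpha|$; 4. $\frac{|k|}{M}|\langle y,x\rangle_\alpha|\le|\langle x,ky\rangle_\alpha|\le |k|M|\langle y,x\rangle_\alpha|$; 5. $\frac{1}{M}|\langle x,ky\rangle_\alpha|\le|\langle kx,y\rangle_\alpha|\le M|\langle x,ky\rangle_\alpha|$; 6. $\frac{1}{M}|\langle kx,y\rangle_\alpha|\le|\langle x,ky\rangle_\alpha|\le M|\langle kx,y\rangle_\alpha|$;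 7. $\frac{1}{M}|\langle ky,x\rangle_\alpha|\le|\langle kx,y\rangle_\alpha|\le M|\langle ky,x\rangle_\alpha|$; 8. $\frac{1}{M}|\langle ky,x\rangle_\alpha|\le|\langle x,ky\rangle_\alpha|\le M|\langle ky,x\rangle_\alpha|$; 9. $|\langle kx+z,y\rangle_\alpha|\le M\big(|k|\,|\langle x,y\rangle_\alpha|+|\langle z,y\rangle_\alpha|\big)$; 10. $|\langle x,ky+z\rangle_\alpha|\le M\big(|k|\,|\langle x,y\rangle_\alpha|+|\langle x,z\rangle_\alpha|\big)$.
   Context: The map $\langle\cdot,\cdot\rangle_\alpha$ satisfying the two-sided bound is the paper's (simplified) "fuzzy inner product" relative to the classical inner product $\langle\cdot,\cdot\rangle'$. *)

theory Defs
  imports "HOL-Analysis.Analysis"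
begin

definition complex_inner_product ::
  "(complex \<Rightarrow> 'a::ab_group_add \<Rightarrow> 'a) \<Rightarrow> ('a \<Rightarrow> 'a \<Rightarrow> complex) \<Rightarrow> bool" where
  "complex_inner_product smul ip \<longleftrightarrow>
     (\<forall>x y. ip x y = cnj (ip y x)) \<and>
     (\<forall>x y z. ip (x + z) y = ip x y + ip z y) \<and>
     (\<forall>k x y. ip (smul k x) y = k * ip x y) \<and>
     (\<forall>x. Im (ip x x) = 0 \<and> Re (ip x x) \<ge> 0) \<and>
     (\<forall>x. ip x x = 0 \<longrightarrow> x = 0)"

end

theory Submission
  imports Defs
begin

text \<open>For a fixed \<open>\<alpha>\<close> the two-sided bound makes \<open>|\<langle>u,v\<rangle>\<^sub>\<alpha>|\<close> comparable to \<open>|\<langle>u,v\<rangle>'|\<close>,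
  \<open>A\<^sub>\<alpha> |\<langle>u,v\<rangle>'| \<le> |\<langle>u,v\<rangle>\<^sub>\<alpha>| \<le> M A\<^sub>\<alpha> |\<langle>u,v\<rangle>'|\<close>, where the supremum hypothesis lets one
  choose \<open>M \<ge> B\<^sub>\<alpha>/A\<^sub>\<alpha>\<close> independently of \<open>\<alpha>\<close>. Any inequality between moduli of the
  classical inner product, such as \<open>|\<langle>kx,y\<rangle>'| = |k| |\<langle>x,y\<rangle>'| = |\<langle>y,kx\<rangle>'|\<close> or the triangle
  inequality, is then transported to \<open>\<langle>\<cdot>,\<cdot>\<rangle>\<^sub>\<alpha>\<close> at the cost of one factor \<open>M\<close>.\<close>

lemma uniform_ratio_bound:
  fixes a b :: "'i \<Rightarrow> real"
  assumes "bdd_above ((\<lambda>i. b i / a i) ` S)" and "\<And>i. i \<in> S \<Longrightarrow> 0 < a i"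
  obtains M where "1 \<le> M" and "\<And>i. i \<in> S \<Longrightarrow> b i \<le> M * a i"
proof -
  obtain C where C: "\<And>i. i \<in> S \<Longrightarrow> b i / a i \<le> C"
    using assms(1) by (auto simp: bdd_above_def)
  have "b i \<le> max 1 C * a i" if "i \<in> S" for i
  proof -
    have "b i / a i \<le> max 1 C" using C[OF that] by (simp add: le_max_iff_disj)
    then show ?thesis using assms(2)[OF that] by (simp add: pos_divide_le_eq)
  qed
  then show ?thesis by (intro that[of "max 1 C"]) auto
qed

definition comparable_up_to :: "real \<Rightarrow> ('a \<Rightarrow> 'b \<Rightarrow> real) \<Rightarrow> ('a \<Rightarrow> 'b \<Rightarrow> real) \<Rightarrow> bool" where
  "comparable_up_to M f g \<longleftrightarrow> (\<exists>a \<ge> 0. \<forall>u v. a * g u v \<le> f u v \<and> f u v \<le> M * a * g u v)"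

lemma comparable_up_toI:
  assumes "\<And>u v. a * g u v \<le> f u v" and "\<And>u v. f u v \<le> b * g u v"
    and "\<And>u v. 0 \<le> g u v" and "0 \<le> a" and "b \<le> M * a"
  shows "comparable_up_to M f g"
  unfolding comparable_up_to_def
proof (intro exI[of _ a] conjI allI)
  fix u v
  show "a * g u v \<le> f u v" by fact
  have "f u v \<le> b * g u v" by fact
  also have "\<dots> \<le> M * a * g u v" using assms by (intro mult_right_mono) auto
  finally show "f u v \<le> M * a * g u v" .
qed (fact \<open>0 \<le> a\<close>)

lemma comparable_up_to_le_scaled:
  assumes "comparable_up_to M f g" and "0 \<le> M" and "g x y \<le> c * g x' y'" and "0 \<le> c"
  shows "f x y \<le> c * M * f x' y'"
proof -
  obtain a where "0 \<le> a" and lower: "\<And>u v. a * g u v \<le> f u v"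
    and upper: "\<And>u v. f u v \<le> M * a * g u v"
    using assms(1) unfolding comparable_up_to_def by blast
  have "f x y \<le> M * a * g x y" by (rule upper)
  also have "\<dots> \<le> M * a * (c * g x' y')" using assms \<open>0 \<le> a\<close> by (intro mult_left_mono) auto
  also have "\<dots> = c * M * (a * g x' y')" by simp
  also have "\<dots> \<le> c * M * f x' y'" using assms by (intro mult_left_mono lower) auto
  finally show ?thesis .
qed

lemma comparable_up_to_ge_scaled:
  assumes "comparable_up_to M f g" and "0 < M" and "c * g x' y' \<le> g x y" and "0 \<le> c"
  shows "c / M * f x' y' \<le> f x y"
proof -
  obtain a where "0 \<le> a" and lower: "\<And>u v. a * g u v \<le> f u v"
    and upper: "\<And>u v. f u v \<le> M * a * g u v"
    using assms(1) unfolding comparable_up_to_def by blast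
  have "c * f x' y' \<le> c * (M * a * g x' y')" using assms by (intro mult_left_mono upper) auto
  also have "\<dots> = M * a * (c * g x' y')" by simp
  also have "\<dots> \<le> M * a * g x y" using assms \<open>0 \<le> a\<close> by (intro mult_left_mono) auto
  also have "\<dots> = M * (a * g x y)" by simp
  also have "\<dots> \<le> M * f x y" using assms by (intro mult_left_mono lower) auto
  finally show ?thesis using \<open>0 < M\<close> by (simp add: field_simps)
qed

lemma comparable_up_to_le_sum:
  assumes "comparable_up_to M f g" and "0 \<le> M" and "g x y \<le> c * g x1 y1 + g x2 y2" and "0 \<le> c"
  shows "f x y \<le> M * (c * f x1 y1 + f x2 y2)"
proof -
  obtain a where "0 \<le> a" and lower: "\<And>u v. a * g u v \<le> f u v"
    and upper: "\<And>u v. f u v \<le> M * a * g u v"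
    using assms(1) unfolding comparable_up_to_def by blast
  have "f x y \<le> M * a * g x y" by (rule upper)
  also have "\<dots> \<le> M * a * (c * g x1 y1 + g x2 y2)" using assms \<open>0 \<le> a\<close> by (intro mult_left_mono) auto
  also have "\<dots> = M * (c * (a * g x1 y1) + a * g x2 y2)" by (simp add: algebra_simps)
  also have "\<dots> \<le> M * (c * f x1 y1 + f x2 y2)"
    using assms by (intro mult_left_mono add_mono lower) auto
  finally show ?thesis .
qed

context
  fixes smul :: "complex \<Rightarrow> 'a::ab_group_add \<Rightarrow> 'a" and ip :: "'a \<Rightarrow> 'a \<Rightarrow> complex"
  assumes ip: "complex_inner_product smul ip"
begin

lemma complex_inner_product_norm_commute: "cmod (ip y x) = cmod (ip x y)"
proof -
  have "ip y x = cnj (ip x y)" using ip unfolding complex_inner_product_def by blast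
  then show ?thesis by simp
qed

lemma complex_inner_product_norm_scale_left: "cmod (ip (smul k x) y) = cmod k * cmod (ip x y)"
proof -
  have "ip (smul k x) y = k * ip x y" using ip unfolding complex_inner_product_def by blast
  then show ?thesis by (simp add: norm_mult)
qed

lemma complex_inner_product_norm_scale_right: "cmod (ip x (smul k y)) = cmod k * cmod (ip x y)"
  by (metis complex_inner_product_norm_commute complex_inner_product_norm_scale_left)

lemma complex_inner_product_norm_add_left: "cmod (ip (x + z) y) \<le> cmod (ip x y) + cmod (ip z y)"
proof -
  have "ip (x + z) y = ip x y + ip z y" using ip unfolding complex_inner_product_def by blast
  then show ?thesis by (simp add: norm_triangle_ineq)
qed

lemma complex_inner_product_norm_add_right: "cmod (ip x (y + z)) \<le> cmod (ip x y) + cmod (ip x z)"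
  by (metis complex_inner_product_norm_commute complex_inner_product_norm_add_left)

end

theorem mainTheorem5:
  fixes smul :: "complex \<Rightarrow> 'a::ab_group_add \<Rightarrow> 'a"
    and ip :: "'a \<Rightarrow> 'a \<Rightarrow> complex"
    and ipa :: "real \<Rightarrow> 'a \<Rightarrow> 'a \<Rightarrow> complex"
    and A B :: "real \<Rightarrow> real"
  assumes vs: "vector_space smul"
    and inner: "complex_inner_product smul ip"
    and AB: "\<forall>\<alpha>\<in>{0<..1}. 0 < A \<alpha> \<and> A \<alpha> \<le> B \<alpha>"
    and bounds: "\<forall>\<alpha>\<in>{0<..1}. \<forall>x y.
        A \<alpha> * cmod (ip x y) \<le> cmod (ipa \<alpha> x y) \<and> cmod (ipa \<alpha> x y) \<le> B \<alpha> * cmod (ip x y)"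
    and sup: "bdd_above ((\<lambda>\<alpha>. B \<alpha> / A \<alpha>) ` {0<..1})"
  shows "\<exists>M::real. M \<ge> 1 \<and> (\<forall>\<alpha>\<in>{0<..1}. \<forall>x y z. \<forall>k::complex.
     (cmod k / M * cmod (ipa \<alpha> x y) \<le> cmod (ipa \<alpha> (smul k x) y) \<and>
        cmod (ipa \<alpha> (smul k x) y) \<le> cmod k * M * cmod (ipa \<alpha> x y)) \<and>
     (cmod k / M * cmod (ipa \<alpha> x y) \<le> cmod (ipa \<alpha> x (smul k y)) \<and>
        cmod (ipa \<alpha> x (smul k y)) \<le> cmod k * M * cmod (ipa \<alpha> x y)) \<and>
     (cmod k / M * cmod (ipa \<alpha> y x) \<le> cmod (ipa \<alpha> (smul k x) y) \<and>
        cmod (ipa \<alpha> (smul k x) y) \<le> cmod k * M * cmod (ipa \<alpha> y x)) \<and>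
     (cmod k / M * cmod (ipa \<alpha> y x) \<le> cmod (ipa \<alpha> x (smul k y)) \<and>
        cmod (ipa \<alpha> x (smul k y)) \<le> cmod k * M * cmod (ipa \<alpha> y x)) \<and>
     (1 / M * cmod (ipa \<alpha> x (smul k y)) \<le> cmod (ipa \<alpha> (smul k x) y) \<and>
        cmod (ipa \<alpha> (smul k x) y) \<le> M * cmod (ipa \<alpha> x (smul k y))) \<and>
     (1 / M * cmod (ipa \<alpha> (smul k x) y) \<le> cmod (ipa \<alpha> x (smul k y)) \<and>
        cmod (ipa \<alpha> x (smul k y)) \<le> M * cmod (ipa \<alpha> (smul k x) y)) \<and>
     (1 / M * cmod (ipa \<alpha> (smul k y) x) \<le> cmod (ipa \<alpha> (smul k x) y) \<and>
        cmod (ipa \<alpha> (smul k x) y) \<le> M * cmod (ipa \<alpha> (smul k y) x)) \<and>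
     (1 / M * cmod (ipa \<alpha> (smul k y) x) \<le> cmod (ipa \<alpha> x (smul k y)) \<and>
        cmod (ipa \<alpha> x (smul k y)) \<le> M * cmod (ipa \<alpha> (smul k y) x)) \<and>
     cmod (ipa \<alpha> (smul k x + z) y) \<le> M * (cmod k * cmod (ipa \<alpha> x y) + cmod (ipa \<alpha> z y)) \<and>
     cmod (ipa \<alpha> x (smul k y + z)) \<le> M * (cmod k * cmod (ipa \<alpha> x y) + cmod (ipa \<alpha> x z)))"
proof -
  obtain M where "1 \<le> M" and ratio: "\<And>\<alpha>. \<alpha> \<in> {0<..1} \<Longrightarrow> B \<alpha> \<le> M * A \<alpha>"
    using uniform_ratio_bound[OF sup] AB by blast
  then have "0 < M" and "0 \<le> M" by auto
  have comparable: "comparable_up_to M (\<lambda>u v. cmod (ipa \<alpha> u v)) (\<lambda>u v. cmod (ip u v))"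
    if "\<alpha> \<in> {0<..1}" for \<alpha>
    using AB bounds that
    by (intro comparable_up_toI[OF _ _ _ _ ratio[OF that]]) (auto intro: less_imp_le)
  note norms = complex_inner_product_norm_commute[OF inner]
    complex_inner_product_norm_scale_left[OF inner]
    complex_inner_product_norm_scale_right[OF inner]
  show ?thesis
    apply (intro exI[of _ M] conjI[OF \<open>1 \<le> M\<close>] ballI allI)
    subgoal premises \<alpha> for \<alpha> x y z k
    proof -
      note le_scaled = comparable_up_to_le_scaled[OF comparable[OF \<alpha>] \<open>0 \<le> M\<close>]
        and ge_scaled = comparable_up_to_ge_scaled[OF comparable[OF \<alpha>] \<open>0 < M\<close>]
        and le_sum = comparable_up_to_le_sum[OF comparable[OF \<alpha>] \<open>0 \<le> M\<close>]
      have sum_left: "cmod (ipa \<alpha> (smul k x + z) y)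
          \<le> M * (cmod k * cmod (ipa \<alpha> x y) + cmod (ipa \<alpha> z y))"
        using complex_inner_product_norm_add_left[OF inner, of "smul k x" z y]
        by (intro le_sum) (simp_all add: norms)
      have sum_right: "cmod (ipa \<alpha> x (smul k y + z))
          \<le> M * (cmod k * cmod (ipa \<alpha> x y) + cmod (ipa \<alpha> x z))"
        using complex_inner_product_norm_add_right[OF inner, of x "smul k y" z]
        by (intro le_sum) (simp_all add: norms)
      show ?thesis
        by (intro conjI sum_left sum_right;
            rule le_scaled le_scaled[where c = 1, simplified] ge_scaled; simp add: norms)
    qed
    done
qed

end
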